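(* Let $(\Omega,\Sigma,\mathbb{P})$ be a probability space, let $X$ be an ideal of $L_0(\Sigma)$, and let $Y$ be a sublattice of $X$ such that the constant function $\mathbb 1\in Y$. Then the following are equivalent: (a) $Y$ is order closed in $X$; (b) $Y=L_0(\sigma(Y))\cap X$.
   Context: $L_0(\Sigma)$ denotes the vector lattice of all real-valued $\Sigma$-measurable functions modulo a.e. equality, with the a.e. pointwise order. An ideal of $L_0(\Sigma)$ is a vector subspace $X$ such that $|x|\le|y|$ a.e. and $y\in X$ imply $x\in X$. A sublattice is a vector subspace closed under $y\mapsto|y|$. A net $(x_\alpha)$ converges in order to $x$ in $X$ if there is a net $(z_\beta)$ in $X$ with $z_\beta\downarrow 0$ such that for every $\beta$ there is $\alpha_0$ with $|x_\alpha-x|\le z_\beta$ for all $\alpha\ge\alpha_0$; a subset $A\subset X$ is order closed if it contains every order limit in $X$ of nets from $A$. For $Y\subset L_0(\Sigma)$, $\sigma(Y)$ is the smallest sub-$\sigma$-algebra of $\Sigma$ which makes all members of $Y$ measurable and contains all $\mathbb{P}$-null sets, and $L_0(\sigma(Y))$ is the set of functions in $L_0(\Sigma)$ measurable with respect to $\sigma(Y)$. *)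

theory Defs
  imports "HOL-Probability.Probability"
begin

text \<open>Elements of L_0(Sigma) are represented by Sigma-measurable real functions;
  a subset of L_0(Sigma) is represented by the set of all its representatives,
  i.e. by a set of measurable functions that is closed under a.e. equality.\<close>

definition ae_le :: "'a measure \<Rightarrow> ('a \<Rightarrow> real) \<Rightarrow> ('a \<Rightarrow> real) \<Rightarrow> bool" where
  "ae_le M f g \<longleftrightarrow> (AE \<omega> in M. f \<omega> \<le> g \<omega>)"

definition ae_saturated :: "'a measure \<Rightarrow> ('a \<Rightarrow> real) set \<Rightarrow> bool" where
  "ae_saturated M A \<longleftrightarrow>
     (\<forall>f\<in>A. \<forall>g\<in>borel_measurable M. (AE \<omega> in M. f \<omega> = g \<omega>) \<longrightarrow> g \<in> A)"

definition L0_subspace :: "'a measure \<Rightarrow> ('a \<Rightarrow> real) set \<Rightarrow> bool" where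
  "L0_subspace M X \<longleftrightarrow> X \<subseteq> borel_measurable M \<and> ae_saturated M X \<and>
     (\<lambda>\<omega>. 0) \<in> X \<and>
     (\<forall>f\<in>X. \<forall>g\<in>X. (\<lambda>\<omega>. f \<omega> + g \<omega>) \<in> X) \<and>
     (\<forall>f\<in>X. \<forall>c::real. (\<lambda>\<omega>. c * f \<omega>) \<in> X)"

definition L0_ideal :: "'a measure \<Rightarrow> ('a \<Rightarrow> real) set \<Rightarrow> bool" where
  "L0_ideal M X \<longleftrightarrow> L0_subspace M X \<and>
     (\<forall>x\<in>borel_measurable M. \<forall>y\<in>X. ae_le M (\<lambda>\<omega>. \<bar>x \<omega>\<bar>) (\<lambda>\<omega>. \<bar>y \<omega>\<bar>) \<longrightarrow> x \<in> X)"

definition L0_sublattice :: "'a measure \<Rightarrow> ('a \<Rightarrow> real) set \<Rightarrow> bool" where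
  "L0_sublattice M Y \<longleftrightarrow> L0_subspace M Y \<and> (\<forall>y\<in>Y. (\<lambda>\<omega>. \<bar>y \<omega>\<bar>) \<in> Y)"

text \<open>z_beta decreasing to 0 in X, represented by its (downward directed) range Z:
  Z is a nonempty downward directed subset of X whose infimum in X is 0.\<close>
definition decr_to_zero_in :: "'a measure \<Rightarrow> ('a \<Rightarrow> real) set \<Rightarrow> ('a \<Rightarrow> real) set \<Rightarrow> bool" where
  "decr_to_zero_in M X Z \<longleftrightarrow> Z \<subseteq> X \<and> Z \<noteq> {} \<and>
     (\<forall>z1\<in>Z. \<forall>z2\<in>Z. \<exists>z3\<in>Z. ae_le M z3 z1 \<and> ae_le M z3 z2) \<and>
     (\<forall>z\<in>Z. ae_le M (\<lambda>\<omega>. 0) z) \<and>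
     (\<forall>w\<in>X. (\<forall>z\<in>Z. ae_le M w z) \<longrightarrow> ae_le M w (\<lambda>\<omega>. 0))"

text \<open>Order convergence in X of a net, the net being represented by its filter of
  tails F (a proper filter on the function space).\<close>
definition order_converges_in :: "'a measure \<Rightarrow> ('a \<Rightarrow> real) set \<Rightarrow> ('a \<Rightarrow> real) filter \<Rightarrow> ('a \<Rightarrow> real) \<Rightarrow> bool" where
  "order_converges_in M X F x \<longleftrightarrow> x \<in> X \<and>
     (\<exists>Z. decr_to_zero_in M X Z \<and>
        (\<forall>z\<in>Z. eventually (\<lambda>y. ae_le M (\<lambda>\<omega>. \<bar>y \<omega> - x \<omega>\<bar>) z) F))"

definition order_closed_in :: "'a measure \<Rightarrow> ('a \<Rightarrow> real) set \<Rightarrow> ('a \<Rightarrow> real) set \<Rightarrow> bool" where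
  "order_closed_in M X A \<longleftrightarrow>
     (\<forall>F x. F \<noteq> bot \<and> eventually (\<lambda>y. y \<in> A) F \<and> order_converges_in M X F x \<longrightarrow> x \<in> A)"

definition sigma_gen :: "'a measure \<Rightarrow> ('a \<Rightarrow> real) set \<Rightarrow> 'a measure" where
  "sigma_gen M Y = sigma (space M)
     ({f -` B \<inter> space M | f B. f \<in> Y \<and> B \<in> sets borel} \<union> null_sets M)"

end

theory Submission
  imports Defs
begin

text \<open>(a) \<Longrightarrow> (b): the sets A with \<open>indicator A \<in> Y\<close> form a \<sigma>-algebra (countable unions are
  dominated limits of finite ones) containing the null sets and the superlevel sets \<open>{y > a}\<close>,
  \<open>y \<in> Y\<close>, which are limits of \<open>min (n (y - a)\<^sup>+) 1\<close>; so it contains \<sigma>(Y). A \<sigma>(Y)-measurable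
  \<open>x \<in> X\<close> is then a dominated pointwise limit of \<sigma>(Y)-simple functions, which lie in Y, and
  dominated pointwise limits of sequences are order limits.

  (b) \<Longrightarrow> (a): in a finite measure space every set Z decreasing to 0 in X contains a sequence
  tending to 0 a.e.: minimise \<open>\<integral> min z 1\<close> over the directed set Z along a chain; the infimum of
  the chain is a lower bound of Z in X, hence 0. So an order limit of a net in Y is an a.e.
  limit of a sequence in Y, which is \<sigma>(Y)-measurable since \<sigma>(Y) contains the null sets.\<close>

lemma L0_subspace_measurable: "L0_subspace M Y \<Longrightarrow> f \<in> Y \<Longrightarrow> f \<in> borel_measurable M"
  by (auto simp: L0_subspace_def)

lemma L0_subspace_zero: "L0_subspace M Y \<Longrightarrow> (\<lambda>\<omega>. 0) \<in> Y"
  by (simp add: L0_subspace_def)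

lemma L0_subspace_add: "L0_subspace M Y \<Longrightarrow> f \<in> Y \<Longrightarrow> g \<in> Y \<Longrightarrow> (\<lambda>\<omega>. f \<omega> + g \<omega>) \<in> Y"
  by (simp add: L0_subspace_def)

lemma L0_subspace_scale: "L0_subspace M Y \<Longrightarrow> f \<in> Y \<Longrightarrow> (\<lambda>\<omega>. c * f \<omega>) \<in> Y"
  by (simp add: L0_subspace_def)

lemma L0_subspace_diff: "L0_subspace M Y \<Longrightarrow> f \<in> Y \<Longrightarrow> g \<in> Y \<Longrightarrow> (\<lambda>\<omega>. f \<omega> - g \<omega>) \<in> Y"
  using L0_subspace_add[of M Y f "\<lambda>\<omega>. -1 * g \<omega>"] L0_subspace_scale[of M Y g "-1"] by simp

lemma L0_subspace_sum:
  assumes "L0_subspace M Y" and "finite I" and "\<And>i. i \<in> I \<Longrightarrow> f i \<in> Y"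
  shows "(\<lambda>\<omega>. \<Sum>i\<in>I. f i \<omega>) \<in> Y"
  using assms(2,3)
proof (induction I rule: finite_induct)
  case empty
  show ?case using L0_subspace_zero[OF assms(1)] by simp
next
  case (insert i I)
  then show ?case using L0_subspace_add[OF assms(1), of "f i"] by simp
qed

lemma L0_subspace_AE_cong:
  "L0_subspace M Y \<Longrightarrow> f \<in> Y \<Longrightarrow> g \<in> borel_measurable M \<Longrightarrow> (AE \<omega> in M. f \<omega> = g \<omega>) \<Longrightarrow> g \<in> Y"
  by (auto simp: L0_subspace_def ae_saturated_def)

lemma L0_subspace_cong:
  "L0_subspace M Y \<Longrightarrow> f \<in> Y \<Longrightarrow> g \<in> borel_measurable M \<Longrightarrow>
    (\<And>\<omega>. \<omega> \<in> space M \<Longrightarrow> f \<omega> = g \<omega>) \<Longrightarrow> g \<in> Y"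
  by (erule L0_subspace_AE_cong) (auto intro: AE_I2)

lemma L0_subspace_const: "L0_subspace M Y \<Longrightarrow> (\<lambda>\<omega>. 1) \<in> Y \<Longrightarrow> (\<lambda>\<omega>. c) \<in> Y"
  using L0_subspace_scale[of M Y "\<lambda>\<omega>. 1" c] by simp

lemma L0_sublattice_subspace: "L0_sublattice M Y \<Longrightarrow> L0_subspace M Y"
  by (simp add: L0_sublattice_def)

lemma L0_sublattice_abs: "L0_sublattice M Y \<Longrightarrow> f \<in> Y \<Longrightarrow> (\<lambda>\<omega>. \<bar>f \<omega>\<bar>) \<in> Y"
  by (simp add: L0_sublattice_def)

lemma L0_sublattice_max:
  assumes Y: "L0_sublattice M Y" and f: "f \<in> Y" and g: "g \<in> Y"
  shows "(\<lambda>\<omega>. max (f \<omega>) (g \<omega>)) \<in> Y"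
proof -
  note sub = L0_sublattice_subspace[OF Y]
  have "(\<lambda>\<omega>. (1/2) * ((f \<omega> + g \<omega>) + \<bar>f \<omega> - g \<omega>\<bar>)) \<in> Y"
    by (intro L0_subspace_scale[OF sub] L0_subspace_add[OF sub] L0_sublattice_abs[OF Y]
        L0_subspace_diff[OF sub] f g)
  moreover have "(\<lambda>\<omega>. (1/2) * ((f \<omega> + g \<omega>) + \<bar>f \<omega> - g \<omega>\<bar>)) = (\<lambda>\<omega>. max (f \<omega>) (g \<omega>))"
    by (auto simp: max_def)
  ultimately show ?thesis by simp
qed

lemma L0_sublattice_min:
  assumes Y: "L0_sublattice M Y" and f: "f \<in> Y" and g: "g \<in> Y"
  shows "(\<lambda>\<omega>. min (f \<omega>) (g \<omega>)) \<in> Y"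
proof -
  note sub = L0_sublattice_subspace[OF Y]
  have "(\<lambda>\<omega>. (1/2) * ((f \<omega> + g \<omega>) - \<bar>f \<omega> - g \<omega>\<bar>)) \<in> Y"
    by (intro L0_subspace_scale[OF sub] L0_subspace_diff[OF sub] L0_subspace_add[OF sub]
        L0_sublattice_abs[OF Y] f g)
  moreover have "(\<lambda>\<omega>. (1/2) * ((f \<omega> + g \<omega>) - \<bar>f \<omega> - g \<omega>\<bar>)) = (\<lambda>\<omega>. min (f \<omega>) (g \<omega>))"
    by (auto simp: min_def)
  ultimately show ?thesis by simp
qed

lemma L0_ideal_subspace: "L0_ideal M X \<Longrightarrow> L0_subspace M X"
  by (simp add: L0_ideal_def)

lemma L0_ideal_dominated:
  "L0_ideal M X \<Longrightarrow> f \<in> borel_measurable M \<Longrightarrow> g \<in> X \<Longrightarrow>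
    (\<And>\<omega>. \<omega> \<in> space M \<Longrightarrow> \<bar>f \<omega>\<bar> \<le> \<bar>g \<omega>\<bar>) \<Longrightarrow> f \<in> X"
  unfolding L0_ideal_def ae_le_def by (blast intro: AE_I2)

lemma L0_ideal_abs:
  assumes X: "L0_ideal M X" and f: "f \<in> X"
  shows "(\<lambda>\<omega>. \<bar>f \<omega>\<bar>) \<in> X"
  using L0_subspace_measurable[OF L0_ideal_subspace[OF X] f]
  by (intro L0_ideal_dominated[OF X _ f]) auto

lemma L0_ideal_bounded:
  "L0_ideal M X \<Longrightarrow> (\<lambda>\<omega>. 1) \<in> X \<Longrightarrow> f \<in> borel_measurable M \<Longrightarrow>
    (\<And>\<omega>. \<omega> \<in> space M \<Longrightarrow> \<bar>f \<omega>\<bar> \<le> 1) \<Longrightarrow> f \<in> X"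
  by (erule L0_ideal_dominated) auto

lemma decr_to_zero_in_decseq:
  assumes u: "\<And>n. u n \<in> X"
    and nonneg: "\<And>n \<omega>. \<omega> \<in> space M \<Longrightarrow> 0 \<le> u n \<omega>"
    and dec: "\<And>m n \<omega>. \<omega> \<in> space M \<Longrightarrow> m \<le> n \<Longrightarrow> u n \<omega> \<le> u m \<omega>"
    and lim: "\<And>\<omega>. \<omega> \<in> space M \<Longrightarrow> (\<lambda>n. u n \<omega>) \<longlonglongrightarrow> 0"
  shows "decr_to_zero_in M X (range u)"
  unfolding decr_to_zero_in_def
proof (intro conjI ballI impI)
  fix z1 z2 assume "z1 \<in> range u" "z2 \<in> range u"
  then obtain m n where "z1 = u m" "z2 = u n" by auto
  then show "\<exists>z3\<in>range u. ae_le M z3 z1 \<and> ae_le M z3 z2"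
    by (intro bexI[of _ "u (max m n)"]) (auto simp: ae_le_def intro!: AE_I2 dec)
next
  fix w assume "\<forall>z\<in>range u. ae_le M w z"
  then have "AE \<omega> in M. \<forall>n. w \<omega> \<le> u n \<omega>" by (simp add: ae_le_def AE_all_countable)
  then show "ae_le M w (\<lambda>\<omega>. 0)"
    unfolding ae_le_def using AE_space
    by eventually_elim (blast intro: LIMSEQ_le_const[OF lim])
qed (use u nonneg in \<open>auto simp: ae_le_def intro!: AE_I2\<close>)

lemma order_converges_in_sequentially:
  assumes x: "x \<in> X" and u: "decr_to_zero_in M X (range u)"
    and tail: "\<And>n k. n \<le> k \<Longrightarrow> ae_le M (\<lambda>\<omega>. \<bar>y k \<omega> - x \<omega>\<bar>) (u n)"
  shows "order_converges_in M X (filtermap y sequentially) x"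
  unfolding order_converges_in_def eventually_filtermap eventually_sequentially
  using x u tail by blast

lemma tail_SUP_LIMSEQ_zero:
  fixes a :: "nat \<Rightarrow> real"
  assumes a: "a \<longlonglongrightarrow> 0" and nonneg: "\<And>n. 0 \<le> a n"
  shows "(\<lambda>n. SUP k\<in>{n..}. a k) \<longlonglongrightarrow> 0"
proof (rule order_tendstoI)
  have bdd: "bdd_above (a ` {n..})" for n
    using Bseq_bdd_above[OF convergent_imp_Bseq[OF convergentI[OF a]]] by (rule bdd_above_mono) auto
  fix e :: real
  assume "e < 0"
  have "0 \<le> (SUP k\<in>{n..}. a k)" for n
    using nonneg[of n] cSUP_upper[OF _ bdd, of n n] by simp
  then show "\<forall>\<^sub>F n in sequentially. e < (SUP k\<in>{n..}. a k)"
    using \<open>e < 0\<close> by (intro always_eventually allI) (rule less_le_trans)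
next
  fix e :: real
  assume "0 < e"
  then have "\<forall>\<^sub>F k in sequentially. a k < e/2"
    using tendstoD[OF a, of "e/2"] nonneg by (simp add: abs_of_nonneg)
  then obtain N where N: "\<And>k. N \<le> k \<Longrightarrow> a k < e/2"
    by (auto simp: eventually_sequentially)
  have "(SUP k\<in>{n..}. a k) \<le> e/2" if "N \<le> n" for n
    using N that by (intro cSUP_least) (auto intro: less_imp_le)
  moreover have "e/2 < e" using \<open>0 < e\<close> by simp
  ultimately show "\<forall>\<^sub>F n in sequentially. (SUP k\<in>{n..}. a k) < e"
    unfolding eventually_sequentially by (blast intro: le_less_trans)
qed

lemma order_converges_in_dominated_LIMSEQ:
  assumes X: "L0_ideal M X" and y: "\<And>n. y n \<in> X" and x: "x \<in> X" and g: "g \<in> X"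
    and dom: "\<And>n \<omega>. \<omega> \<in> space M \<Longrightarrow> \<bar>y n \<omega>\<bar> \<le> g \<omega>"
    and lim: "\<And>\<omega>. \<omega> \<in> space M \<Longrightarrow> (\<lambda>n. y n \<omega>) \<longlonglongrightarrow> x \<omega>"
  shows "order_converges_in M X (filtermap y sequentially) x"
proof -
  note X_meas = L0_subspace_measurable[OF L0_ideal_subspace[OF X]]
  have [measurable]: "y n \<in> borel_measurable M" "x \<in> borel_measurable M" for n
    using y x by (auto intro: X_meas)
  define u where "u n \<omega> = (SUP k\<in>{n..}. \<bar>y k \<omega> - x \<omega>\<bar>)" for n \<omega>
  have diff_le: "\<bar>y k \<omega> - x \<omega>\<bar> \<le> g \<omega> + \<bar>x \<omega>\<bar>" if "\<omega> \<in> space M" for k \<omega>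
    using dom[OF that, of k] abs_triangle_ineq4[of "y k \<omega>" "x \<omega>"] by linarith
  have bdd: "bdd_above ((\<lambda>k. \<bar>y k \<omega> - x \<omega>\<bar>) ` {n..})" if "\<omega> \<in> space M" for n \<omega>
    using diff_le[OF that] by (intro bdd_aboveI2[where M="g \<omega> + \<bar>x \<omega>\<bar>"])
  have upper: "\<bar>y k \<omega> - x \<omega>\<bar> \<le> u n \<omega>" if "\<omega> \<in> space M" "n \<le> k" for n k \<omega>
    unfolding u_def using that bdd by (intro cSUP_upper) auto
  have u_le: "u n \<omega> \<le> g \<omega> + \<bar>x \<omega>\<bar>" if "\<omega> \<in> space M" for n \<omega>
    unfolding u_def using diff_le[OF that] by (intro cSUP_least) auto
  have u_nonneg: "0 \<le> u n \<omega>" if "\<omega> \<in> space M" for n \<omega>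
    using upper[OF that order_refl] by (rule order_trans[rotated]) simp
  have u_meas: "u n \<in> borel_measurable M" for n
    unfolding u_def using bdd by (intro borel_measurable_cSUP) auto
  have "(\<lambda>\<omega>. g \<omega> + \<bar>x \<omega>\<bar>) \<in> X"
    by (intro L0_subspace_add[OF L0_ideal_subspace[OF X]] L0_ideal_abs[OF X] x g)
  then have uX: "u n \<in> X" for n
    by (rule L0_ideal_dominated[OF X u_meas]) (metis abs_of_nonneg order_trans u_nonneg u_le)
  have u_lim: "(\<lambda>n. u n \<omega>) \<longlonglongrightarrow> 0" if "\<omega> \<in> space M" for \<omega>
    unfolding u_def using tendsto_rabs_zero[OF LIM_zero[OF lim[OF that]]]
    by (rule tail_SUP_LIMSEQ_zero) simp
  have "decr_to_zero_in M X (range u)"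
    by (rule decr_to_zero_in_decseq[OF uX u_nonneg _ u_lim])
      (auto simp: u_def intro!: cSUP_subset_mono bdd)
  then show ?thesis
    by (rule order_converges_in_sequentially[OF x]) (auto simp: ae_le_def intro!: AE_I2 upper)
qed

lemma order_closed_in_dominated_limit:
  assumes X: "L0_ideal M X" and closed: "order_closed_in M X A" and AX: "A \<subseteq> X"
    and y: "\<And>n. y n \<in> A" and x: "x \<in> X" and g: "g \<in> X"
    and dom: "\<And>n \<omega>. \<omega> \<in> space M \<Longrightarrow> \<bar>y n \<omega>\<bar> \<le> g \<omega>"
    and lim: "\<And>\<omega>. \<omega> \<in> space M \<Longrightarrow> (\<lambda>n. y n \<omega>) \<longlonglongrightarrow> x \<omega>"
  shows "x \<in> A"
proof -
  have "order_converges_in M X (filtermap y sequentially) x"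
    using y AX by (intro order_converges_in_dominated_LIMSEQ[OF X _ x g dom lim]) auto
  moreover have "eventually (\<lambda>f. f \<in> A) (filtermap y sequentially)"
    by (simp add: eventually_filtermap y)
  ultimately show ?thesis
    using closed unfolding order_closed_in_def by (metis filtermap_bot_iff trivial_limit_sequentially)
qed

lemma measurable_AE_eq_subalgebra:
  assumes sub: "subalgebra M N" and null: "null_sets M \<subseteq> sets N"
    and f: "f \<in> measurable N K" and g: "g \<in> measurable M K"
    and ae: "AE \<omega> in M. f \<omega> = g \<omega>"
  shows "g \<in> measurable N K"
proof (rule measurableI)
  have space: "space N = space M" using sub by (simp add: subalgebra_def)
  obtain E where E: "{\<omega> \<in> space M. f \<omega> \<noteq> g \<omega>} \<subseteq> E" "E \<in> null_sets M"
    using ae by (auto elim!: AE_E intro: null_setsI)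
  show "g \<omega> \<in> space K" if "\<omega> \<in> space N" for \<omega>
    using measurable_space[OF g] that space by simp
  fix B assume B: "B \<in> sets K"
  have "g -` B \<inter> space N = (f -` B \<inter> space N - E) \<union> (g -` B \<inter> space M \<inter> E)"
    using E(1) space by auto
  moreover have "g -` B \<inter> space M \<inter> E \<in> null_sets M"
    using E(2) measurable_sets[OF g B] by (rule null_set_Int1)
  ultimately show "g -` B \<inter> space N \<in> sets N"
    using measurable_sets[OF f B] E(2) null by (metis sets.Diff sets.Un subsetD)
qed

lemma borel_measurable_AE_LIMSEQ_subalgebra:
  fixes g :: "nat \<Rightarrow> 'a \<Rightarrow> real"
  assumes sub: "subalgebra M N" and null: "null_sets M \<subseteq> sets N"
    and g: "\<And>n. g n \<in> borel_measurable N" and x: "x \<in> borel_measurable M"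
    and lim: "AE \<omega> in M. (\<lambda>n. g n \<omega>) \<longlonglongrightarrow> x \<omega>"
  shows "x \<in> borel_measurable N"
proof (rule measurable_AE_eq_subalgebra[OF sub null _ x])
  show "(\<lambda>\<omega>. lim (\<lambda>n. g n \<omega>)) \<in> borel_measurable N"
    using g by measurable
  show "AE \<omega> in M. lim (\<lambda>n. g n \<omega>) = x \<omega>"
    using lim by eventually_elim (rule limI)
qed

lemma space_sigma_gen: "space (sigma_gen M Y) = space M"
  unfolding sigma_gen_def by (rule space_measure_of) (auto dest: sets.sets_into_space)

lemma sets_sigma_gen:
  "sets (sigma_gen M Y) = sigma_sets (space M)
     ({f -` B \<inter> space M | f B. f \<in> Y \<and> B \<in> sets borel} \<union> null_sets M)"
  unfolding sigma_gen_def by (rule sets_measure_of) (auto dest: sets.sets_into_space)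

lemma subalgebra_sigma_gen:
  assumes "Y \<subseteq> borel_measurable M"
  shows "subalgebra M (sigma_gen M Y)"
  unfolding subalgebra_def space_sigma_gen sets_sigma_gen
  using assms by (intro conjI refl sets.sigma_sets_subset) (auto simp: measurable_sets)

lemma null_sets_subset_sigma_gen: "null_sets M \<subseteq> sets (sigma_gen M Y)"
  unfolding sets_sigma_gen by auto

lemma measurable_sigma_gen: "f \<in> Y \<Longrightarrow> f \<in> borel_measurable (sigma_gen M Y)"
  by (rule measurableI) (auto simp: space_sigma_gen sets_sigma_gen)

lemma sets_sigma_gen_subset:
  assumes S: "sigma_algebra (space M) S"
    and Y: "\<And>f B. f \<in> Y \<Longrightarrow> B \<in> sets borel \<Longrightarrow> f -` B \<inter> space M \<in> S"
    and null: "null_sets M \<subseteq> S"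
  shows "sets (sigma_gen M Y) \<subseteq> S"
  unfolding sets_sigma_gen using Y null by (intro sigma_algebra.sigma_sets_subset[OF S]) auto

lemma simple_function_in_L0_subspace:
  fixes f :: "'a \<Rightarrow> real"
  assumes Y: "L0_subspace M Y" and sub: "subalgebra M N"
    and ind: "\<And>A. A \<in> sets N \<Longrightarrow> indicator A \<in> Y"
    and f: "simple_function N f"
  shows "f \<in> Y"
proof (rule L0_subspace_cong[OF Y])
  have space: "space N = space M" using sub by (simp add: subalgebra_def)
  show "(\<lambda>\<omega>. \<Sum>v\<in>f ` space N. v * indicator (f -` {v} \<inter> space N) \<omega>) \<in> Y"
  proof (rule L0_subspace_sum[OF Y])
    show "finite (f ` space N)" using simple_functionD(1)[OF f] .
    fix v
    show "(\<lambda>\<omega>. v * indicator (f -` {v} \<inter> space N) \<omega>) \<in> Y"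
      using simple_functionD(2)[OF f] by (intro L0_subspace_scale[OF Y] ind)
  qed
  show "f \<in> borel_measurable M"
    by (rule measurable_from_subalg[OF sub borel_measurable_simple_function[OF f]])
  show "(\<Sum>v\<in>f ` space N. v * indicator (f -` {v} \<inter> space N) \<omega>) = f \<omega>"
    if "\<omega> \<in> space M" for \<omega>
  proof -
    have "f \<omega> = (\<Sum>v\<in>f ` space N. indicator (f -` {v} \<inter> space N) \<omega> *\<^sub>R v)"
      using simple_function_indicator_representation_banach[OF f] that space by blast
    then show ?thesis by (simp only: real_scaleR_def mult.commute)
  qed
qed

definition indicator_sets :: "'a measure \<Rightarrow> ('a \<Rightarrow> real) set \<Rightarrow> 'a set set" where
  "indicator_sets M Y = {A. A \<subseteq> space M \<and> indicator A \<in> Y}"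

lemma indicator_sets_subset_sets:
  assumes "L0_subspace M Y"
  shows "indicator_sets M Y \<subseteq> sets M"
proof
  fix A assume "A \<in> indicator_sets M Y"
  then have "(indicator A :: 'a \<Rightarrow> real) \<in> borel_measurable M" "A \<subseteq> space M"
    using L0_subspace_measurable[OF assms] by (auto simp: indicator_sets_def)
  then show "A \<in> sets M" by (simp add: borel_measurable_indicator_iff Int_absorb2)
qed

lemma algebra_indicator_sets:
  assumes Y: "L0_sublattice M Y" and one: "(\<lambda>\<omega>. 1) \<in> Y"
  shows "algebra (space M) (indicator_sets M Y)"
  unfolding algebra_iff_Un
proof (intro conjI ballI)
  note sub = L0_sublattice_subspace[OF Y]
  show "indicator_sets M Y \<subseteq> Pow (space M)" by (auto simp: indicator_sets_def)
  have "(indicator {} :: 'a \<Rightarrow> real) = (\<lambda>\<omega>. 0)" by auto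
  then show "{} \<in> indicator_sets M Y"
    using L0_subspace_zero[OF sub] by (simp add: indicator_sets_def)
next
  note sub = L0_sublattice_subspace[OF Y]
  fix A assume A: "A \<in> indicator_sets M Y"
  have "(\<lambda>\<omega>. 1 - indicator A \<omega>) \<in> Y"
    using A by (intro L0_subspace_diff[OF sub one]) (simp add: indicator_sets_def)
  then have "indicator (space M - A) \<in> Y"
    by (rule L0_subspace_cong[OF sub])
      (use A indicator_sets_subset_sets[OF sub] in \<open>auto simp: indicator_def\<close>)
  then show "space M - A \<in> indicator_sets M Y" by (simp add: indicator_sets_def)
  fix B assume B: "B \<in> indicator_sets M Y"
  have "(\<lambda>\<omega>. max (indicator A \<omega>) (indicator B \<omega>)) \<in> Y"
    using A B by (intro L0_sublattice_max[OF Y]) (simp_all add: indicator_sets_def)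
  moreover have "(\<lambda>\<omega>. max (indicator A \<omega>) (indicator B \<omega>)) = (indicator (A \<union> B) :: 'a \<Rightarrow> real)"
    by (auto simp: indicator_def)
  ultimately show "A \<union> B \<in> indicator_sets M Y" using A B by (simp add: indicator_sets_def)
qed

context
  fixes M :: "'a measure" and X Y :: "('a \<Rightarrow> real) set"
  assumes X: "L0_ideal M X" and YX: "Y \<subseteq> X" and Y: "L0_sublattice M Y"
    and one: "(\<lambda>\<omega>. 1) \<in> Y" and closed: "order_closed_in M X Y"
begin

lemma indicator_in_order_closed_sublattice:
  assumes A: "A \<in> sets M"
    and y: "\<And>n. y n \<in> Y" and bounded: "\<And>n \<omega>. \<omega> \<in> space M \<Longrightarrow> \<bar>y n \<omega>\<bar> \<le> 1"
    and lim: "\<And>\<omega>. \<omega> \<in> space M \<Longrightarrow> (\<lambda>n. y n \<omega>) \<longlonglongrightarrow> indicator A \<omega>"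
  shows "A \<in> indicator_sets M Y"
proof -
  have one_X: "(\<lambda>\<omega>. 1) \<in> X" using one YX by auto
  have "indicator A \<in> X"
    by (rule L0_ideal_bounded[OF X one_X]) (use A in \<open>auto simp: indicator_def\<close>)
  then have "indicator A \<in> Y"
    by (rule order_closed_in_dominated_limit[OF X closed YX y _ one_X bounded lim])
  then show ?thesis using sets.sets_into_space[OF A] by (simp add: indicator_sets_def)
qed

lemma sigma_algebra_indicator_sets: "sigma_algebra (space M) (indicator_sets M Y)"
  unfolding sigma_algebra_iff
proof (intro conjI allI impI algebra_indicator_sets[OF Y one])
  interpret algebra "space M" "indicator_sets M Y" by (rule algebra_indicator_sets[OF Y one])
  fix A :: "nat \<Rightarrow> 'a set" assume A: "range A \<subseteq> indicator_sets M Y"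
  show "(\<Union>i. A i) \<in> indicator_sets M Y"
  proof (rule indicator_in_order_closed_sublattice)
    show "(\<Union>i. A i) \<in> sets M"
      using A indicator_sets_subset_sets[OF L0_sublattice_subspace[OF Y]] by blast
    show "indicator (\<Union>i<n. A i) \<in> Y" for n
      using A finite_UN[of "{..<n}" A] by (auto simp: indicator_sets_def)
    show "(\<lambda>n. indicator (\<Union>i<n. A i) \<omega>) \<longlonglongrightarrow> (indicator (\<Union>i. A i) \<omega> :: real)" for \<omega>
    proof (cases "\<omega> \<in> (\<Union>i. A i)")
      case True
      then obtain i where "\<omega> \<in> A i" by auto
      then have "\<forall>n\<ge>Suc i. indicator (\<Union>i<n. A i) \<omega> = (indicator (\<Union>i. A i) \<omega> :: real)"
        by (auto simp: indicator_def)
      then show ?thesis by (intro tendsto_eventually) (auto simp: eventually_sequentially)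
    qed (auto simp: indicator_def)
  qed (auto simp: indicator_def)
qed

lemma superlevel_set_in_indicator_sets:
  assumes y: "y \<in> Y"
  shows "{\<omega> \<in> space M. a < y \<omega>} \<in> indicator_sets M Y"
proof (rule indicator_in_order_closed_sublattice)
  note sub = L0_sublattice_subspace[OF Y]
  show "{\<omega> \<in> space M. a < y \<omega>} \<in> sets M"
    using L0_subspace_measurable[OF sub y] by measurable
  show "(\<lambda>\<omega>. min (real n * max (y \<omega> - a) 0) 1) \<in> Y" for n
    by (intro L0_sublattice_min[OF Y] L0_sublattice_max[OF Y] L0_subspace_scale[OF sub]
        L0_subspace_diff[OF sub] L0_subspace_const[OF sub one] y)
  show "(\<lambda>n. min (real n * max (y \<omega> - a) 0) 1) \<longlonglongrightarrow> indicator {\<omega> \<in> space M. a < y \<omega>} \<omega>"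
    if "\<omega> \<in> space M" for \<omega>
  proof (cases "a < y \<omega>")
    case True
    obtain N where N: "1 / (y \<omega> - a) < real N" using reals_Archimedean2 by blast
    have "min (real n * max (y \<omega> - a) 0) 1 = 1" if "N \<le> n" for n
    proof -
      have "1 < real N * (y \<omega> - a)" using N True by (simp add: field_simps)
      also have "\<dots> \<le> real n * (y \<omega> - a)" using that True by (intro mult_right_mono) auto
      finally show ?thesis using True by auto
    qed
    then show ?thesis using True \<open>\<omega> \<in> space M\<close>
      by (intro tendsto_eventually) (auto simp: eventually_sequentially)
  qed (simp add: indicator_def)
qed auto

lemma sets_sigma_gen_subset_indicator_sets: "sets (sigma_gen M Y) \<subseteq> indicator_sets M Y"
proof (rule sets_sigma_gen_subset[OF sigma_algebra_indicator_sets])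
  interpret S: sigma_algebra "space M" "indicator_sets M Y"
    by (rule sigma_algebra_indicator_sets)
  fix f :: "'a \<Rightarrow> real" and B :: "real set" assume f: "f \<in> Y" and B: "B \<in> sets borel"
  have "f \<in> borel_measurable (sigma (space M) (indicator_sets M Y))"
    using superlevel_set_in_indicator_sets[OF f]
    by (auto simp: borel_measurable_iff_greater S.sets_measure_of_eq S.space_measure_of_eq)
  from measurable_sets[OF this B]
  show "f -` B \<inter> space M \<in> indicator_sets M Y"
    by (simp add: S.sets_measure_of_eq S.space_measure_of_eq)
next
  show "null_sets M \<subseteq> indicator_sets M Y"
  proof
    fix A assume A: "A \<in> null_sets M"
    note sub = L0_sublattice_subspace[OF Y]
    have "indicator A \<in> Y"
      by (rule L0_subspace_AE_cong[OF sub L0_subspace_zero[OF sub]])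
        (use A AE_not_in[OF A] in \<open>auto elim!: eventually_mono\<close>)
    then show "A \<in> indicator_sets M Y"
      using sets.sets_into_space[OF null_setsD2[OF A]] by (simp add: indicator_sets_def)
  qed
qed

lemma order_closed_sublattice_eq_sigma_gen: "Y = {f \<in> X. f \<in> borel_measurable (sigma_gen M Y)}"
proof (intro antisym subsetI CollectI conjI; (elim CollectE conjE)?)
  fix f assume "f \<in> Y"
  then show "f \<in> X" "f \<in> borel_measurable (sigma_gen M Y)"
    using YX measurable_sigma_gen by auto
next
  fix f assume fX: "f \<in> X" and f: "f \<in> borel_measurable (sigma_gen M Y)"
  note sub = L0_sublattice_subspace[OF Y]
  have subalg: "subalgebra M (sigma_gen M Y)"
    using L0_subspace_measurable[OF sub] by (intro subalgebra_sigma_gen) auto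
  obtain s where s: "\<And>n. simple_function (sigma_gen M Y) (s n)"
    and lim: "\<And>\<omega>. \<omega> \<in> space M \<Longrightarrow> (\<lambda>n. s n \<omega>) \<longlonglongrightarrow> f \<omega>"
    and bound: "\<And>n \<omega>. \<omega> \<in> space M \<Longrightarrow> \<bar>s n \<omega>\<bar> \<le> 2 * \<bar>f \<omega>\<bar>"
    using borel_measurable_implies_sequence_metric[OF f, of 0]
    by (simp add: space_sigma_gen) blast
  have sY: "s n \<in> Y" for n
    using sets_sigma_gen_subset_indicator_sets
    by (intro simple_function_in_L0_subspace[OF sub subalg _ s]) (auto simp: indicator_sets_def)
  have "(\<lambda>\<omega>. 2 * \<bar>f \<omega>\<bar>) \<in> X"
    by (intro L0_subspace_scale[OF L0_ideal_subspace[OF X]] L0_ideal_abs[OF X fX])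
  then show "f \<in> Y"
    by (rule order_closed_in_dominated_limit[OF X closed YX sY fX _ bound lim])
qed

end

lemma directed_minimizing_chain:
  fixes \<phi> :: "'b \<Rightarrow> real"
  assumes ne: "Z \<noteq> {}"
    and dir: "\<And>z1 z2. z1 \<in> Z \<Longrightarrow> z2 \<in> Z \<Longrightarrow> \<exists>z3\<in>Z. R z3 z1 \<and> R z3 z2"
    and mono: "\<And>z1 z2. z1 \<in> Z \<Longrightarrow> z2 \<in> Z \<Longrightarrow> R z1 z2 \<Longrightarrow> \<phi> z1 \<le> \<phi> z2"
    and bdd: "bdd_below (\<phi> ` Z)"
  obtains z where "\<And>n. z n \<in> Z" "\<And>n. R (z (Suc n)) (z n)"
    "(\<lambda>n. \<phi> (z n)) \<longlonglongrightarrow> Inf (\<phi> ` Z)"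
proof -
  define c where "c = Inf (\<phi> ` Z)"
  have c_le: "c \<le> \<phi> z" if "z \<in> Z" for z
    unfolding c_def using that bdd by (rule cInf_lower[OF imageI])
  have "\<exists>z\<in>Z. \<phi> z < c + inverse (real (Suc n))" for n
    using cInf_less_iff[of "\<phi> ` Z" "c + inverse (real (Suc n))"] ne bdd
    by (auto simp: c_def)
  then obtain s where s: "\<And>n. s n \<in> Z" "\<And>n. \<phi> (s n) < c + inverse (real (Suc n))"
    by metis
  define lower where "lower z1 z2 = (SOME z3. z3 \<in> Z \<and> R z3 z1 \<and> R z3 z2)" for z1 z2
  have "lower z1 z2 \<in> Z \<and> R (lower z1 z2) z1 \<and> R (lower z1 z2) z2" if "z1 \<in> Z" "z2 \<in> Z" for z1 z2
    unfolding lower_def using dir[OF that] by (rule someI2_bex) auto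
  note lower = this[THEN conjunct1] this[THEN conjunct2, THEN conjunct1] this[THEN conjunct2, THEN conjunct2]
  \<comment> \<open>each step moves below both the previous element and the next near-minimiser\<close>
  define z where "z = rec_nat (s 0) (\<lambda>n p. lower p (s (Suc n)))"
  have z_simps: "z 0 = s 0" "z (Suc n) = lower (z n) (s (Suc n))" for n
    by (simp_all add: z_def)
  have z: "z n \<in> Z" for n
    by (induction n) (simp_all add: z_simps s(1) lower(1))
  have z_le_s: "\<phi> (z n) \<le> \<phi> (s n)" for n
  proof (cases n)
    case (Suc m)
    then show ?thesis using mono[OF lower(1)[OF z s(1)] s(1) lower(3)[OF z s(1)]] by (simp add: z_simps)
  qed (simp add: z_simps)
  have "\<forall>\<^sub>F n in sequentially. c \<le> \<phi> (z n)"
    by (intro always_eventually allI c_le z)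
  moreover have "\<forall>\<^sub>F n in sequentially. \<phi> (z n) \<le> c + inverse (real (Suc n))"
    by (intro always_eventually allI order.trans[OF z_le_s less_imp_le[OF s(2)]])
  moreover have "(\<lambda>n. c + inverse (real (Suc n))) \<longlonglongrightarrow> c"
    using tendsto_add[OF tendsto_const LIMSEQ_inverse_real_of_nat, of c] by simp
  ultimately have lim: "(\<lambda>n. \<phi> (z n)) \<longlonglongrightarrow> c"
    by (rule tendsto_sandwich[OF _ _ tendsto_const])
  have step: "R (z (Suc n)) (z n)" for n
    using lower(2)[OF z s(1)] by (simp add: z_simps)
  show ?thesis
    using z step lim unfolding c_def by (rule that)
qed

lemma AE_le_of_minimizing_sequence:
  fixes V :: "('a \<Rightarrow> real) set"
  assumes int: "\<And>v. v \<in> V \<Longrightarrow> integrable M v"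
    and dir: "\<And>v1 v2. v1 \<in> V \<Longrightarrow> v2 \<in> V \<Longrightarrow> \<exists>v3\<in>V. ae_le M v3 v1 \<and> ae_le M v3 v2"
    and w: "\<And>n. w n \<in> V" and c: "\<And>v. v \<in> V \<Longrightarrow> c \<le> integral\<^sup>L M v"
    and lim: "(\<lambda>n. integral\<^sup>L M (w n)) \<longlonglongrightarrow> c"
    and v: "v \<in> V"
    and h: "h \<in> borel_measurable M" "\<And>n. AE \<omega> in M. h \<omega> \<le> w n \<omega>"
  shows "AE \<omega> in M. h \<omega> \<le> v \<omega>"
proof -
  obtain u where u: "\<And>n. u n \<in> V" "\<And>n. ae_le M (u n) v" "\<And>n. ae_le M (u n) (w n)"
    using dir[OF v w] by metis
  define D where "D \<omega> = max 0 (h \<omega> - v \<omega>)" for \<omega>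
  have D_nonneg: "0 \<le> D \<omega>" for \<omega> by (simp add: D_def)
  have "integrable M (\<lambda>\<omega>. \<bar>w 0 \<omega>\<bar> + \<bar>v \<omega>\<bar>)"
    using int w v by auto
  then have D_int: "integrable M D"
  proof (rule Bochner_Integration.integrable_bound)
    show "D \<in> borel_measurable M"
      unfolding D_def using h(1) borel_measurable_integrable[OF int[OF v]] by measurable
    show "AE \<omega> in M. norm (D \<omega>) \<le> norm (\<bar>w 0 \<omega>\<bar> + \<bar>v \<omega>\<bar>)"
      using h(2)[of 0] by eventually_elim (auto simp: D_def)
  qed
  have "integral\<^sup>L M D \<le> integral\<^sup>L M (w n) - c" for n
  proof -
    have "AE \<omega> in M. D \<omega> \<le> w n \<omega> - u n \<omega>"
      using h(2)[of n] u(2,3)[of n] unfolding ae_le_def by eventually_elim (auto simp: D_def)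
    then have "integral\<^sup>L M D \<le> (\<integral>\<omega>. w n \<omega> - u n \<omega> \<partial>M)"
      using int w u(1) by (intro integral_mono_AE D_int integrable_diff) auto
    also have "\<dots> = integral\<^sup>L M (w n) - integral\<^sup>L M (u n)"
      using int w u(1) by (intro Bochner_Integration.integral_diff) auto
    also have "\<dots> \<le> integral\<^sup>L M (w n) - c"
      using c[OF u(1)] by simp
    finally show ?thesis .
  qed
  moreover have "(\<lambda>n. integral\<^sup>L M (w n) - c) \<longlonglongrightarrow> 0"
    using lim by (simp add: LIM_zero_iff)
  ultimately have "integral\<^sup>L M D \<le> 0"
    by (intro LIMSEQ_le_const[where X="\<lambda>n. integral\<^sup>L M (w n) - c"]) auto
  moreover have "0 \<le> integral\<^sup>L M D"
    using D_nonneg by (simp add: integral_nonneg_AE)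
  ultimately have "AE \<omega> in M. D \<omega> = 0"
    using integral_nonneg_eq_0_iff_AE[OF D_int] D_nonneg by simp
  then show ?thesis
    by eventually_elim (simp add: D_def)
qed

lemma directed_integrable_essential_inf_seq:
  fixes V :: "('a \<Rightarrow> real) set"
  assumes int: "\<And>v. v \<in> V \<Longrightarrow> integrable M v" and ne: "V \<noteq> {}"
    and dir: "\<And>v1 v2. v1 \<in> V \<Longrightarrow> v2 \<in> V \<Longrightarrow> \<exists>v3\<in>V. ae_le M v3 v1 \<and> ae_le M v3 v2"
    and bdd: "bdd_below (integral\<^sup>L M ` V)"
  obtains w where "\<And>n. w n \<in> V" "\<And>n. ae_le M (w (Suc n)) (w n)"
    "\<And>h v. h \<in> borel_measurable M \<Longrightarrow> (\<And>n. AE \<omega> in M. h \<omega> \<le> w n \<omega>) \<Longrightarrow> v \<in> V \<Longrightarrow>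
      AE \<omega> in M. h \<omega> \<le> v \<omega>"
proof -
  obtain w where w: "\<And>n. w n \<in> V" "\<And>n. ae_le M (w (Suc n)) (w n)"
    and w_lim: "(\<lambda>n. integral\<^sup>L M (w n)) \<longlonglongrightarrow> Inf (integral\<^sup>L M ` V)"
  proof (rule directed_minimizing_chain[of V "ae_le M" "integral\<^sup>L M"])
    show "integral\<^sup>L M v1 \<le> integral\<^sup>L M v2" if "v1 \<in> V" "v2 \<in> V" "ae_le M v1 v2" for v1 v2
      using that int unfolding ae_le_def by (intro integral_mono_AE) auto
  qed (use ne dir bdd in auto)
  show ?thesis
  proof (rule that)
    show "w n \<in> V" "ae_le M (w (Suc n)) (w n)" for n by (fact w)+
    fix h v
    assume h: "h \<in> borel_measurable M" "\<And>n. AE \<omega> in M. h \<omega> \<le> w n \<omega>" and v: "v \<in> V"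
    show "AE \<omega> in M. h \<omega> \<le> v \<omega>"
      by (rule AE_le_of_minimizing_sequence[OF int dir w(1) _ w_lim v h]) (use bdd in \<open>auto intro: cInf_lower\<close>)
  qed
qed

definition clamp01 :: "real \<Rightarrow> real" where
  "clamp01 r = max 0 (min r 1)"

lemma clamp01_mono: "a \<le> b \<Longrightarrow> clamp01 a \<le> clamp01 b"
  by (auto simp: clamp01_def)

lemma clamp01_nonneg: "0 \<le> clamp01 r"
  by (simp add: clamp01_def)

lemma clamp01_le_one: "clamp01 r \<le> 1"
  by (simp add: clamp01_def)

lemma clamp01_le: "0 \<le> r \<Longrightarrow> clamp01 r \<le> r"
  by (simp add: clamp01_def)

lemma clamp01_eq_self: "0 \<le> r \<Longrightarrow> clamp01 r < 1 \<Longrightarrow> clamp01 r = r"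
  by (auto simp: clamp01_def)

lemma clamp01_decseq_LIMSEQ_zero:
  fixes r :: "nat \<Rightarrow> real"
  assumes nonneg: "\<And>n. 0 \<le> r n" and dec: "\<And>n. clamp01 (r (Suc n)) \<le> clamp01 (r n)"
    and inf: "(INF n. clamp01 (r n)) \<le> 0"
  shows "r \<longlonglongrightarrow> 0"
proof -
  have "(\<lambda>n. clamp01 (r n)) \<longlonglongrightarrow> (INF n. clamp01 (r n))"
    using dec by (intro LIMSEQ_decseq_INF decseq_SucI bdd_belowI2[where m=0] clamp01_nonneg)
  moreover have "0 \<le> (INF n. clamp01 (r n))"
    by (intro cINF_greatest clamp01_nonneg) simp
  ultimately have lim: "(\<lambda>n. clamp01 (r n)) \<longlonglongrightarrow> 0"
    using inf by simp
  then have "\<forall>\<^sub>F n in sequentially. clamp01 (r n) < 1"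
    by (rule order_tendstoD) simp
  then have "\<forall>\<^sub>F n in sequentially. clamp01 (r n) = r n"
    by eventually_elim (use nonneg clamp01_eq_self in blast)
  with lim show ?thesis
    by (simp add: tendsto_cong)
qed

lemma directed_clamp01_minimizing_seq:
  fixes Z :: "('a \<Rightarrow> real) set"
  assumes M: "finite_measure M" and Z_meas: "Z \<subseteq> borel_measurable M" and ne: "Z \<noteq> {}"
    and dir: "\<And>z1 z2. z1 \<in> Z \<Longrightarrow> z2 \<in> Z \<Longrightarrow> \<exists>z3\<in>Z. ae_le M z3 z1 \<and> ae_le M z3 z2"
  obtains z where "\<And>n. z n \<in> Z"
    "\<And>n. AE \<omega> in M. clamp01 (z (Suc n) \<omega>) \<le> clamp01 (z n \<omega>)"
    "\<And>z'. z' \<in> Z \<Longrightarrow> AE \<omega> in M. (INF n. clamp01 (z n \<omega>)) \<le> clamp01 (z' \<omega>)"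
proof -
  \<comment> \<open>clamping makes the elements integrable without changing their behaviour near 0\<close>
  define V where "V = (\<lambda>z \<omega>. clamp01 (z \<omega>)) ` Z"
  have V_meas: "v \<in> borel_measurable M" if "v \<in> V" for v
    using that Z_meas unfolding V_def clamp01_def by auto
  have V_int: "integrable M v" if "v \<in> V" for v
    using V_meas[OF that] that unfolding V_def
    by (intro finite_measure.integrable_const_bound[OF M, where B=1] AE_I2)
      (auto simp: clamp01_nonneg clamp01_le_one)
  have V_dir: "\<exists>v3\<in>V. ae_le M v3 v1 \<and> ae_le M v3 v2" if v: "v1 \<in> V" "v2 \<in> V" for v1 v2
  proof -
    obtain z1 z2 where "z1 \<in> Z" "z2 \<in> Z"
      "v1 = (\<lambda>\<omega>. clamp01 (z1 \<omega>))" "v2 = (\<lambda>\<omega>. clamp01 (z2 \<omega>))"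
      using v by (auto simp: V_def)
    with dir obtain z3 where z3: "z3 \<in> Z" "ae_le M z3 z1" "ae_le M z3 z2" by blast
    have "ae_le M (\<lambda>\<omega>. clamp01 (z3 \<omega>)) (\<lambda>\<omega>. clamp01 (z \<omega>))" if "ae_le M z3 z" for z
      using that unfolding ae_le_def by (auto elim!: eventually_mono intro: clamp01_mono)
    then show ?thesis
      using z3 \<open>v1 = _\<close> \<open>v2 = _\<close> by (auto simp: V_def)
  qed
  have "bdd_below (integral\<^sup>L M ` V)"
    by (intro bdd_belowI2[where m=0]) (auto simp: V_def clamp01_nonneg)
  then obtain w where w: "\<And>n. w n \<in> V" "\<And>n. ae_le M (w (Suc n)) (w n)"
    and lower: "\<And>h v. h \<in> borel_measurable M \<Longrightarrow> (\<And>n. AE \<omega> in M. h \<omega> \<le> w n \<omega>) \<Longrightarrow> v \<in> V \<Longrightarrow>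
      AE \<omega> in M. h \<omega> \<le> v \<omega>"
    using directed_integrable_essential_inf_seq[OF V_int _ V_dir] ne by (auto simp: V_def)
  obtain z where z: "\<And>n. z n \<in> Z" and w_eq: "\<And>n. w n = (\<lambda>\<omega>. clamp01 (z n \<omega>))"
    using w(1) unfolding V_def image_iff by metis
  have bdd: "bdd_below (range (\<lambda>n. w n \<omega>))" for \<omega>
    by (intro bdd_belowI2[where m=0]) (simp add: w_eq clamp01_nonneg)
  have inf_meas: "(\<lambda>\<omega>. INF n. w n \<omega>) \<in> borel_measurable M"
    using bdd V_meas[OF w(1)] by (intro borel_measurable_cINF) auto
  have inf_le: "AE \<omega> in M. (INF n. w n \<omega>) \<le> w n \<omega>" for n
    using bdd by (intro AE_I2 cINF_lower) auto
  show ?thesis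
  proof (rule that)
    show "z n \<in> Z" for n by (fact z)
    show "AE \<omega> in M. clamp01 (z (Suc n) \<omega>) \<le> clamp01 (z n \<omega>)" for n
      using w(2)[of n] by (simp add: ae_le_def w_eq)
    show "AE \<omega> in M. (INF n. clamp01 (z n \<omega>)) \<le> clamp01 (z' \<omega>)" if "z' \<in> Z" for z'
      using lower[OF inf_meas inf_le, of "\<lambda>\<omega>. clamp01 (z' \<omega>)"] that by (simp add: V_def w_eq)
  qed
qed

lemma decr_to_zero_in_AE_LIMSEQ:
  fixes Z :: "('a \<Rightarrow> real) set"
  assumes M: "finite_measure M" and X: "L0_ideal M X" and one: "(\<lambda>\<omega>. 1) \<in> X"
    and Z: "decr_to_zero_in M X Z"
  obtains z where "\<And>n. z n \<in> Z" "AE \<omega> in M. (\<lambda>n. z n \<omega>) \<longlonglongrightarrow> 0"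
proof -
  have ZX: "Z \<subseteq> X" and ne: "Z \<noteq> {}"
    and dir: "\<And>z1 z2. z1 \<in> Z \<Longrightarrow> z2 \<in> Z \<Longrightarrow> \<exists>z3\<in>Z. ae_le M z3 z1 \<and> ae_le M z3 z2"
    and nonneg: "\<And>z. z \<in> Z \<Longrightarrow> AE \<omega> in M. 0 \<le> z \<omega>"
    and inf: "\<And>h. h \<in> X \<Longrightarrow> (\<forall>z\<in>Z. ae_le M h z) \<Longrightarrow> AE \<omega> in M. h \<omega> \<le> 0"
    using Z unfolding decr_to_zero_in_def ae_le_def by auto
  have Z_meas: "Z \<subseteq> borel_measurable M"
    using ZX L0_subspace_measurable[OF L0_ideal_subspace[OF X]] by auto
  obtain z where z: "\<And>n. z n \<in> Z"
    and dec: "\<And>n. AE \<omega> in M. clamp01 (z (Suc n) \<omega>) \<le> clamp01 (z n \<omega>)"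
    and lower: "\<And>z'. z' \<in> Z \<Longrightarrow> AE \<omega> in M. (INF n. clamp01 (z n \<omega>)) \<le> clamp01 (z' \<omega>)"
    using directed_clamp01_minimizing_seq[OF M Z_meas ne dir] by blast
  define h where "h \<omega> = (INF n. clamp01 (z n \<omega>))" for \<omega>
  have bdd: "bdd_below (range (\<lambda>n. clamp01 (z n \<omega>)))" for \<omega>
    by (intro bdd_belowI2[where m=0]) (simp add: clamp01_nonneg)
  have h_nonneg: "0 \<le> h \<omega>" for \<omega>
    unfolding h_def by (intro cINF_greatest) (auto simp: clamp01_nonneg)
  have h_le_one: "h \<omega> \<le> 1" for \<omega>
    unfolding h_def using cINF_lower[OF bdd, of 0 \<omega>] clamp01_le_one[of "z 0 \<omega>"] by simp
  have "(\<lambda>\<omega>. clamp01 (z n \<omega>)) \<in> borel_measurable M" for n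
  proof -
    have [measurable]: "z n \<in> borel_measurable M" using z Z_meas by auto
    show ?thesis unfolding clamp01_def by measurable
  qed
  then have "h \<in> borel_measurable M"
    unfolding h_def using bdd by (intro borel_measurable_cINF) auto
  then have "h \<in> X"
    by (rule L0_ideal_bounded[OF X one]) (metis abs_of_nonneg h_nonneg h_le_one)
  moreover have "ae_le M h z'" if z': "z' \<in> Z" for z'
    using lower[OF z'] nonneg[OF z'] unfolding ae_le_def h_def
    by eventually_elim (auto dest: clamp01_le intro: order_trans)
  ultimately have "AE \<omega> in M. h \<omega> \<le> 0"
    using inf by blast
  moreover have "AE \<omega> in M. \<forall>n. clamp01 (z (Suc n) \<omega>) \<le> clamp01 (z n \<omega>)"
    using dec by (simp add: AE_all_countable)
  moreover have "AE \<omega> in M. \<forall>n. 0 \<le> z n \<omega>"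
    using nonneg[OF z] by (simp add: AE_all_countable)
  ultimately have "AE \<omega> in M. (\<lambda>n. z n \<omega>) \<longlonglongrightarrow> 0"
    unfolding h_def by eventually_elim (rule clamp01_decseq_LIMSEQ_zero; blast)
  with z show ?thesis by (rule that)
qed

lemma order_converges_in_AE_LIMSEQ:
  assumes M: "finite_measure M" and X: "L0_ideal M X" and one: "(\<lambda>\<omega>. 1) \<in> X"
    and F: "F \<noteq> bot" and A: "eventually (\<lambda>y. y \<in> A) F"
    and conv: "order_converges_in M X F x"
  obtains y where "\<And>n. y n \<in> A" "AE \<omega> in M. (\<lambda>n. y n \<omega>) \<longlonglongrightarrow> x \<omega>"
proof -
  obtain Z where Z: "decr_to_zero_in M X Z"
    and tails: "\<And>z. z \<in> Z \<Longrightarrow> eventually (\<lambda>y. ae_le M (\<lambda>\<omega>. \<bar>y \<omega> - x \<omega>\<bar>) z) F"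
    using conv unfolding order_converges_in_def by blast
  obtain z where z: "\<And>n. z n \<in> Z" and z_lim: "AE \<omega> in M. (\<lambda>n. z n \<omega>) \<longlonglongrightarrow> 0"
    using decr_to_zero_in_AE_LIMSEQ[OF M X one Z] by blast
  have "\<exists>y. y \<in> A \<and> ae_le M (\<lambda>\<omega>. \<bar>y \<omega> - x \<omega>\<bar>) (z n)" for n
    using eventually_happens[OF eventually_conj[OF A tails[OF z]]] F by auto
  then obtain y where y: "\<And>n. y n \<in> A" "\<And>n. ae_le M (\<lambda>\<omega>. \<bar>y n \<omega> - x \<omega>\<bar>) (z n)"
    by metis
  have "AE \<omega> in M. \<forall>n. \<bar>y n \<omega> - x \<omega>\<bar> \<le> z n \<omega>"
    using y(2) by (simp add: ae_le_def AE_all_countable)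
  then have "AE \<omega> in M. (\<lambda>n. y n \<omega>) \<longlonglongrightarrow> x \<omega>"
    using z_lim
  proof eventually_elim
    case (elim \<omega>)
    have "(\<lambda>n. y n \<omega> - x \<omega>) \<longlonglongrightarrow> 0"
      by (rule Lim_null_comparison[OF _ elim(2)]) (use elim(1) in simp)
    then show ?case by (simp add: LIM_zero_iff)
  qed
  with y(1) show ?thesis by (rule that)
qed

lemma order_closed_if_eq_sigma_gen:
  assumes M: "finite_measure M" and X: "L0_ideal M X" and one: "(\<lambda>\<omega>. 1) \<in> X"
    and eq: "Y = {f \<in> X. f \<in> borel_measurable (sigma_gen M Y)}"
  shows "order_closed_in M X Y"
  unfolding order_closed_in_def
proof (intro allI impI; elim conjE)
  fix F x assume F: "F \<noteq> bot" and Y: "eventually (\<lambda>y. y \<in> Y) F"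
    and conv: "order_converges_in M X F x"
  obtain y where y: "\<And>n. y n \<in> Y" and lim: "AE \<omega> in M. (\<lambda>n. y n \<omega>) \<longlonglongrightarrow> x \<omega>"
    using order_converges_in_AE_LIMSEQ[OF M X one F Y conv] by blast
  have x: "x \<in> X" using conv by (simp add: order_converges_in_def)
  have "Y \<subseteq> borel_measurable M"
    using eq L0_subspace_measurable[OF L0_ideal_subspace[OF X]] by blast
  then have "x \<in> borel_measurable (sigma_gen M Y)"
    using measurable_sigma_gen[OF y] L0_subspace_measurable[OF L0_ideal_subspace[OF X] x] lim
    by (rule borel_measurable_AE_LIMSEQ_subalgebra[OF subalgebra_sigma_gen null_sets_subset_sigma_gen])
  with x eq show "x \<in> Y" by blast
qed

theorem lemma2p2:
  fixes M :: "'a measure" and X Y :: "('a \<Rightarrow> real) set"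
  assumes "prob_space M"
    and "L0_ideal M X"
    and "Y \<subseteq> X" and "L0_sublattice M Y"
    and "(\<lambda>\<omega>. 1) \<in> Y"
  shows "order_closed_in M X Y \<longleftrightarrow>
         Y = {f \<in> X. f \<in> borel_measurable (sigma_gen M Y)}"
proof
  assume "order_closed_in M X Y"
  with assms(2-5) show "Y = {f \<in> X. f \<in> borel_measurable (sigma_gen M Y)}"
    by (rule order_closed_sublattice_eq_sigma_gen)
next
  assume eq: "Y = {f \<in> X. f \<in> borel_measurable (sigma_gen M Y)}"
  have "finite_measure M"
    using assms(1) by (rule prob_space.finite_measure)
  moreover have "(\<lambda>\<omega>. 1) \<in> X"
    using assms(3,5) by blast
  ultimately show "order_closed_in M X Y"
    using order_closed_if_eq_sigma_gen[OF _ assms(2) _ eq] by blast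
qed

end
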